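(* Let $X$ be an absolutely monotone quasi-lattice satisfying $\|x\|=\|\lceil x\rceil\|$ for all $x\in X$. Then $X$ is $1$-absolutely Davies-Ng regular.
   Context: A pre-ordered Banach space is a real Banach space $X$ with a cone $X_+$ ($X_++X_+\subseteq X_+$, $\lambda X_+\subseteq X_+$ for $\lambda\ge0$); $x\le y$ means $y-x\in X_+$. $X$ is absolutely monotone if $\pm x\le y$ implies $\|x\|\le\|y\|$. $X$ is $1$-absolutely Davies-Ng regular if it is absolutely monotone and approximately $1$-absolutely conormal (for all $x$ and $\varepsilon>0$ there is $a\in X_+$ with $\pm x\le a$ and $\|a\|<\|x\|+\varepsilon$). For subsets $A$, $\upsilon(A)$ is the set of upper bounds and $\mu(A)$ the set of minimal upper bounds. With $\sigma_{x,y}(z)=\|z-x\|+\|z-y\|$, a pre-ordered Banach space with closed cone is a $\upsilon$-quasi-lattice (resp. $\mu$-quasi-lattice) if for all $x,y$ the set $\upsilon(\{x,y\})$ (resp. $\mu(\{x,y\})$) is non-empty and contains a unique minimizer $x\tilde\vee y$ of $\sigma_{x,y}$ on it; a quasi-lattice is either. $\lceil x\rceil:=(-x)\tilde\vee x$. *)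

theory Defs
  imports "HOL-Analysis.Analysis"
begin

definition cone_set :: "'a::real_vector set \<Rightarrow> bool" where
  "cone_set C \<longleftrightarrow> (\<forall>x\<in>C. \<forall>y\<in>C. x + y \<in> C) \<and> (\<forall>x\<in>C. \<forall>l::real. l \<ge> 0 \<longrightarrow> l *\<^sub>R x \<in> C)"

definition cle :: "'a::real_vector set \<Rightarrow> 'a \<Rightarrow> 'a \<Rightarrow> bool" where
  "cle C x y \<longleftrightarrow> y - x \<in> C"

definition upper_bds :: "'a::real_vector set \<Rightarrow> 'a set \<Rightarrow> 'a set" where
  "upper_bds C A = {u. \<forall>a\<in>A. cle C a u}"

definition min_upper_bds :: "'a::real_vector set \<Rightarrow> 'a set \<Rightarrow> 'a set" where
  "min_upper_bds C A = {u \<in> upper_bds C A. \<forall>v \<in> upper_bds C A. cle C v u \<longrightarrow> v = u}"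

definition sigma_fn :: "'a::real_normed_vector \<Rightarrow> 'a \<Rightarrow> 'a \<Rightarrow> real" where
  "sigma_fn x y z = norm (z - x) + norm (z - y)"

definition quasi_lattice_wrt :: "'a::banach set \<Rightarrow> ('a set \<Rightarrow> 'a set) \<Rightarrow> bool" where
  "quasi_lattice_wrt C U \<longleftrightarrow> cone_set C \<and> closed C \<and>
     (\<forall>x y. U {x, y} \<noteq> {} \<and>
        (\<exists>!z. z \<in> U {x, y} \<and> (\<forall>w \<in> U {x, y}. sigma_fn x y z \<le> sigma_fn x y w)))"

definition upsilon_quasi_lattice :: "'a::banach set \<Rightarrow> bool" where
  "upsilon_quasi_lattice C \<longleftrightarrow> quasi_lattice_wrt C (upper_bds C)"

definition mu_quasi_lattice :: "'a::banach set \<Rightarrow> bool" where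
  "mu_quasi_lattice C \<longleftrightarrow> quasi_lattice_wrt C (min_upper_bds C)"

definition qsup :: "('a::banach set \<Rightarrow> 'a set) \<Rightarrow> 'a \<Rightarrow> 'a \<Rightarrow> 'a" where
  "qsup U x y = (THE z. z \<in> U {x, y} \<and> (\<forall>w \<in> U {x, y}. sigma_fn x y z \<le> sigma_fn x y w))"

definition qceil :: "('a::banach set \<Rightarrow> 'a set) \<Rightarrow> 'a \<Rightarrow> 'a" where
  "qceil U x = qsup U (- x) x"

definition absolutely_monotone :: "'a::real_normed_vector set \<Rightarrow> bool" where
  "absolutely_monotone C \<longleftrightarrow> (\<forall>x y. cle C (- x) y \<and> cle C x y \<longrightarrow> norm x \<le> norm y)"

definition approx_1_abs_conormal :: "'a::real_normed_vector set \<Rightarrow> bool" where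
  "approx_1_abs_conormal C \<longleftrightarrow>
     (\<forall>x. \<forall>\<epsilon>>0. \<exists>a\<in>C. cle C (- x) a \<and> cle C x a \<and> norm a < norm x + \<epsilon>)"

definition abs_DN_regular_1 :: "'a::real_normed_vector set \<Rightarrow> bool" where
  "abs_DN_regular_1 C \<longleftrightarrow> absolutely_monotone C \<and> approx_1_abs_conormal C"

end

theory Submission
  imports Defs
begin

text \<open>The element \<open>\<lceil>x\<rceil>\<close> dominates both \<open>x\<close> and \<open>-x\<close>, hence lies in the cone, and by
  hypothesis has the same norm as \<open>x\<close>; so it witnesses conormality even with \<open>\<epsilon> = 0\<close>.\<close>

lemma qsup_mem:
  assumes "quasi_lattice_wrt C U"
  shows "qsup U x y \<in> U {x, y}"
proof -
  have "\<exists>!z. z \<in> U {x, y} \<and> (\<forall>w \<in> U {x, y}. sigma_fn x y z \<le> sigma_fn x y w)"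
    using assms unfolding quasi_lattice_wrt_def by blast
  from theI'[OF this] show ?thesis unfolding qsup_def by blast
qed

lemma min_upper_bds_subset: "min_upper_bds C A \<subseteq> upper_bds C A"
  unfolding min_upper_bds_def by blast

lemma qceil_upper_bound:
  assumes "U = upper_bds C \<or> U = min_upper_bds C" and "quasi_lattice_wrt C U"
  shows "cle C (- x) (qceil U x)" and "cle C x (qceil U x)"
proof -
  have "qceil U x \<in> upper_bds C {- x, x}"
    using qsup_mem[OF assms(2)] assms(1) min_upper_bds_subset
    unfolding qceil_def by blast
  then show "cle C (- x) (qceil U x)" and "cle C x (qceil U x)"
    unfolding upper_bds_def by auto
qed

lemma cone_set_mem_if_abs_le:
  assumes cone: "cone_set C" and "cle C (- x) a" and "cle C x a"
  shows "a \<in> C"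
proof -
  have "(a + x) + (a - x) \<in> C"
    using assms unfolding cle_def cone_set_def by (metis diff_minus_eq_add)
  then have "(1/2::real) *\<^sub>R ((a + x) + (a - x)) \<in> C"
    using cone unfolding cone_set_def
    by (meson less_eq_real_def divide_pos_pos zero_less_one zero_less_numeral)
  moreover have "(1/2::real) *\<^sub>R ((a + x) + (a - x)) = a"
    by (simp add: scaleR_2[symmetric])
  ultimately show ?thesis by simp
qed

theorem lemma7p1:
  fixes C :: "'a::banach set" and U :: "'a set \<Rightarrow> 'a set"
  assumes "U = upper_bds C \<or> U = min_upper_bds C"
    and "quasi_lattice_wrt C U"
    and "absolutely_monotone C"
    and "\<forall>x. norm x = norm (qceil U x)"
  shows "abs_DN_regular_1 C"
proof -
  have cone: "cone_set C" using assms(2) unfolding quasi_lattice_wrt_def by blast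
  have "approx_1_abs_conormal C"
    unfolding approx_1_abs_conormal_def
  proof (intro allI impI)
    fix x :: 'a and e :: real
    assume "e > 0"
    have "cle C (- x) (qceil U x)" and "cle C x (qceil U x)"
      using qceil_upper_bound[OF assms(1,2)] by auto
    moreover from this have "qceil U x \<in> C"
      using cone_set_mem_if_abs_le[OF cone] by blast
    moreover have "norm (qceil U x) < norm x + e"
      using assms(4) \<open>e > 0\<close> by simp
    ultimately show "\<exists>a\<in>C. cle C (- x) a \<and> cle C x a \<and> norm a < norm x + e"
      by blast
  qed
  with assms(3) show ?thesis unfolding abs_DN_regular_1_def by blast
qed

end
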